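(* Let $R$ be a ring, $M$ a left $R$-module and $P$ a strongly hollow submodule of $M$. Then either $P$ is a waist in $M$ (i.e. comparable under inclusion with every submodule of $M$), or there exist submodules $Q\subseteq M'$ of $M$ with $P\subseteq M'\subseteq M$ such that $P$ is the unique supplement of $Q$ in $M'$ and $M'/Q$ is hollow.
   Context: $P$ is strongly hollow in $M$ if for all submodules $K,L$ of $M$, $P\subseteq K+L$ implies $P\subseteq K$ or $P\subseteq L$. A supplement of $Q$ in $M'$ is a submodule $N\subseteq M'$ minimal with respect to $N+Q=M'$; it is the unique supplement if it is the only one. A module $N$ is hollow if $N=K+L$ for submodules $K,L$ implies $K=N$ or $L=N$. *)

theory Defs
  imports "HOL-Algebra.Module" "HOL-Algebra.AbelCoset"
begin

text \<open>Left modules over an arbitrary (not necessarily commutative) ring R.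
  The library locale module requires a commutative ring, so we define the
  general notion directly.\<close>

definition left_module :: "('a, 'c) ring_scheme \<Rightarrow> ('a, 'b, 'd) module_scheme \<Rightarrow> bool" where
  "left_module R M \<longleftrightarrow> ring R \<and> abelian_group M \<and>
     (\<forall>a\<in>carrier R. \<forall>x\<in>carrier M. a \<odot>\<^bsub>M\<^esub> x \<in> carrier M) \<and>
     (\<forall>a\<in>carrier R. \<forall>b\<in>carrier R. \<forall>x\<in>carrier M.
        (a \<oplus>\<^bsub>R\<^esub> b) \<odot>\<^bsub>M\<^esub> x = a \<odot>\<^bsub>M\<^esub> x \<oplus>\<^bsub>M\<^esub> b \<odot>\<^bsub>M\<^esub> x) \<and>
     (\<forall>a\<in>carrier R. \<forall>x\<in>carrier M. \<forall>y\<in>carrier M.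
        a \<odot>\<^bsub>M\<^esub> (x \<oplus>\<^bsub>M\<^esub> y) = a \<odot>\<^bsub>M\<^esub> x \<oplus>\<^bsub>M\<^esub> a \<odot>\<^bsub>M\<^esub> y) \<and>
     (\<forall>a\<in>carrier R. \<forall>b\<in>carrier R. \<forall>x\<in>carrier M.
        (a \<otimes>\<^bsub>R\<^esub> b) \<odot>\<^bsub>M\<^esub> x = a \<odot>\<^bsub>M\<^esub> (b \<odot>\<^bsub>M\<^esub> x)) \<and>
     (\<forall>x\<in>carrier M. \<one>\<^bsub>R\<^esub> \<odot>\<^bsub>M\<^esub> x = x)"

definition strongly_hollow_in ::
  "('a, 'c) ring_scheme \<Rightarrow> ('a, 'b, 'd) module_scheme \<Rightarrow> 'b set \<Rightarrow> bool" where
  "strongly_hollow_in R M P \<longleftrightarrow>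
     (\<forall>K L. submodule K R M \<longrightarrow> submodule L R M \<longrightarrow>
        P \<subseteq> K <+>\<^bsub>M\<^esub> L \<longrightarrow> P \<subseteq> K \<or> P \<subseteq> L)"

definition waist_in ::
  "('a, 'c) ring_scheme \<Rightarrow> ('a, 'b, 'd) module_scheme \<Rightarrow> 'b set \<Rightarrow> bool" where
  "waist_in R M P \<longleftrightarrow> (\<forall>N. submodule N R M \<longrightarrow> P \<subseteq> N \<or> N \<subseteq> P)"

text \<open>N is a supplement of Q in M' (M' a submodule of M; the submodules of M'
  are the submodules of M contained in M').\<close>
definition is_supplement ::
  "('a, 'c) ring_scheme \<Rightarrow> ('a, 'b, 'd) module_scheme \<Rightarrow> 'b set \<Rightarrow> 'b set \<Rightarrow> 'b set \<Rightarrow> bool" where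
  "is_supplement R M M' Q N \<longleftrightarrow>
     submodule N R M \<and> N \<subseteq> M' \<and> N <+>\<^bsub>M\<^esub> Q = M' \<and>
     (\<forall>N'. submodule N' R M \<longrightarrow> N' \<subseteq> N \<longrightarrow> N' <+>\<^bsub>M\<^esub> Q = M' \<longrightarrow> N' = N)"

definition unique_supplement ::
  "('a, 'c) ring_scheme \<Rightarrow> ('a, 'b, 'd) module_scheme \<Rightarrow> 'b set \<Rightarrow> 'b set \<Rightarrow> 'b set \<Rightarrow> bool" where
  "unique_supplement R M M' Q N \<longleftrightarrow>
     is_supplement R M M' Q N \<and> (\<forall>N'. is_supplement R M M' Q N' \<longrightarrow> N' = N)"

text \<open>Only the additive group and the scalar
  multiplication are relevant; the ring-multiplication fields are unused.\<close>
definition quotient_module ::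
  "('a, 'c) ring_scheme \<Rightarrow> ('a, 'b, 'd) module_scheme \<Rightarrow> 'b set \<Rightarrow> 'b set \<Rightarrow> ('a, 'b set) module" where
  "quotient_module R M M' Q =
     \<lparr> carrier = {Q +>\<^bsub>M\<^esub> x | x. x \<in> M'},
       monoid.mult = (\<lambda>A B. undefined), one = undefined,
       zero = Q,
       add = (\<lambda>A B. A <+>\<^bsub>M\<^esub> B),
       smult = (\<lambda>r A. Q <+>\<^bsub>M\<^esub> ((\<lambda>x. r \<odot>\<^bsub>M\<^esub> x) ` A)) \<rparr>"

definition hollow :: "('a, 'c) ring_scheme \<Rightarrow> ('a, 'b, 'd) module_scheme \<Rightarrow> bool" where
  "hollow R N \<longleftrightarrow>
     (\<forall>K L. submodule K R N \<longrightarrow> submodule L R N \<longrightarrow>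
        K <+>\<^bsub>N\<^esub> L = carrier N \<longrightarrow> K = carrier N \<or> L = carrier N)"

end

theory Submission imports Defs begin

text \<open>If P is not a waist, pick a submodule N with \<not> P \<subseteq> N and put M' = P + N.
  Whenever N' + N = M', strong hollowness applied to P \<subseteq> N' + N gives P \<subseteq> N';
  hence P is the unique supplement of N in M'.  Likewise a decomposition
  M'/N = K + L lifts to P \<subseteq> \<Union>K + \<Union>L, so P lies in one of the two preimages,
  which then contains P + N = M'; hence M'/N is hollow.\<close>

lemma left_module_abelian_group: "left_module R M \<Longrightarrow> abelian_group M"
  unfolding left_module_def by auto

lemma left_module_ring: "left_module R M \<Longrightarrow> ring R"
  unfolding left_module_def by auto

lemma left_module_smult_closed:
  "left_module R M \<Longrightarrow> a \<in> carrier R \<Longrightarrow> x \<in> carrier M \<Longrightarrow> a \<odot>\<^bsub>M\<^esub> x \<in> carrier M"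
  unfolding left_module_def by auto

lemma left_module_smult_add_right:
  "left_module R M \<Longrightarrow> a \<in> carrier R \<Longrightarrow> x \<in> carrier M \<Longrightarrow> y \<in> carrier M \<Longrightarrow>
    a \<odot>\<^bsub>M\<^esub> (x \<oplus>\<^bsub>M\<^esub> y) = a \<odot>\<^bsub>M\<^esub> x \<oplus>\<^bsub>M\<^esub> a \<odot>\<^bsub>M\<^esub> y"
  unfolding left_module_def by auto

lemma left_module_smult_minus_one:
  assumes lm: "left_module R M" and x: "x \<in> carrier M"
  shows "(\<ominus>\<^bsub>R\<^esub> \<one>\<^bsub>R\<^esub>) \<odot>\<^bsub>M\<^esub> x = \<ominus>\<^bsub>M\<^esub> x"
proof -
  interpret M: abelian_group M using left_module_abelian_group[OF lm] .
  interpret R: ring R using left_module_ring[OF lm] .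
  have add_smult: "(a \<oplus>\<^bsub>R\<^esub> b) \<odot>\<^bsub>M\<^esub> x = a \<odot>\<^bsub>M\<^esub> x \<oplus>\<^bsub>M\<^esub> b \<odot>\<^bsub>M\<^esub> x"
    if "a \<in> carrier R" "b \<in> carrier R" for a b
    using lm x that unfolding left_module_def by auto
  have one_smult: "\<one>\<^bsub>R\<^esub> \<odot>\<^bsub>M\<^esub> x = x"
    using lm x unfolding left_module_def by auto
  have zero_in: "\<zero>\<^bsub>R\<^esub> \<odot>\<^bsub>M\<^esub> x \<in> carrier M"
    and minus_in: "(\<ominus>\<^bsub>R\<^esub> \<one>\<^bsub>R\<^esub>) \<odot>\<^bsub>M\<^esub> x \<in> carrier M"
    using left_module_smult_closed[OF lm _ x] by simp_all
  have "\<zero>\<^bsub>R\<^esub> \<odot>\<^bsub>M\<^esub> x \<oplus>\<^bsub>M\<^esub> \<zero>\<^bsub>R\<^esub> \<odot>\<^bsub>M\<^esub> x = \<zero>\<^bsub>M\<^esub> \<oplus>\<^bsub>M\<^esub> \<zero>\<^bsub>R\<^esub> \<odot>\<^bsub>M\<^esub> x"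
    using add_smult[of "\<zero>\<^bsub>R\<^esub>" "\<zero>\<^bsub>R\<^esub>"] zero_in by simp
  then have zero_smult: "\<zero>\<^bsub>R\<^esub> \<odot>\<^bsub>M\<^esub> x = \<zero>\<^bsub>M\<^esub>"
    using zero_in by (simp add: M.add.right_cancel)
  have "x \<oplus>\<^bsub>M\<^esub> (\<ominus>\<^bsub>R\<^esub> \<one>\<^bsub>R\<^esub>) \<odot>\<^bsub>M\<^esub> x = \<zero>\<^bsub>M\<^esub>"
    using add_smult[of "\<one>\<^bsub>R\<^esub>" "\<ominus>\<^bsub>R\<^esub> \<one>\<^bsub>R\<^esub>"] one_smult zero_smult by (simp add: R.r_neg)
  then show ?thesis
    using minus_in x by (metis M.add.m_comm M.minus_equality)
qed

lemma submoduleD: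
  assumes "submodule H R M"
  shows "H \<subseteq> carrier M" "\<zero>\<^bsub>M\<^esub> \<in> H"
    "\<And>x y. x \<in> H \<Longrightarrow> y \<in> H \<Longrightarrow> x \<oplus>\<^bsub>M\<^esub> y \<in> H"
    "\<And>a x. a \<in> carrier R \<Longrightarrow> x \<in> H \<Longrightarrow> a \<odot>\<^bsub>M\<^esub> x \<in> H"
  using subgroup.subset[OF submodule.axioms(1)[OF assms]]
    subgroup.one_closed[OF submodule.axioms(1)[OF assms]]
    subgroup.m_closed[OF submodule.axioms(1)[OF assms]]
    submodule.smult_closed[OF assms] by auto

text \<open>Closure under negation need not be assumed, as \<open>\<ominus> x = (\<ominus> \<one>) \<odot> x\<close>.\<close>

lemma left_module_submoduleI:
  assumes lm: "left_module R M" and "H \<subseteq> carrier M" "\<zero>\<^bsub>M\<^esub> \<in> H"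
    "\<And>x y. x \<in> H \<Longrightarrow> y \<in> H \<Longrightarrow> x \<oplus>\<^bsub>M\<^esub> y \<in> H"
    "\<And>a x. a \<in> carrier R \<Longrightarrow> x \<in> H \<Longrightarrow> a \<odot>\<^bsub>M\<^esub> x \<in> H"
  shows "submodule H R M"
proof -
  interpret R: ring R using left_module_ring[OF lm] .
  have "inv\<^bsub>add_monoid M\<^esub> x \<in> H" if "x \<in> H" for x
    using assms(5)[OF _ that, of "\<ominus>\<^bsub>R\<^esub> \<one>\<^bsub>R\<^esub>"] left_module_smult_minus_one[OF lm] that assms(2)
    by (metis R.a_inv_closed R.one_closed subsetD a_inv_def)
  then show ?thesis
    by (intro submodule.intro subgroup.intro) (auto simp: submodule_axioms_def assms)
qed

lemma submodule_set_add:
  assumes lm: "left_module R M" and A: "submodule A R M" and B: "submodule B R M"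
  shows "submodule (A <+>\<^bsub>M\<^esub> B) R M"
proof (rule submodule.intro)
  interpret M: abelian_group M using left_module_abelian_group[OF lm] .
  show "subgroup (A <+>\<^bsub>M\<^esub> B) (add_monoid M)"
    unfolding set_add_def
    by (rule M.a_comm_group[THEN comm_group.mult_subgroups])
      (use A B in \<open>auto dest: submodule.axioms(1)\<close>)
  show "submodule_axioms (A <+>\<^bsub>M\<^esub> B) R M"
    unfolding submodule_axioms_def set_add_def'
  proof (clarsimp)
    fix a x y assume a: "a \<in> carrier R" and x: "x \<in> A" and y: "y \<in> B"
    then have "x \<in> carrier M" "y \<in> carrier M"
      using submoduleD(1)[OF A] submoduleD(1)[OF B] by auto
    then have "a \<odot>\<^bsub>M\<^esub> (x \<oplus>\<^bsub>M\<^esub> y) = a \<odot>\<^bsub>M\<^esub> x \<oplus>\<^bsub>M\<^esub> a \<odot>\<^bsub>M\<^esub> y"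
      using left_module_smult_add_right[OF lm a] by simp
    moreover have "a \<odot>\<^bsub>M\<^esub> x \<in> A" "a \<odot>\<^bsub>M\<^esub> y \<in> B"
      using submoduleD(4)[OF A a x] submoduleD(4)[OF B a y] .
    ultimately show "\<exists>x'\<in>A. \<exists>y'\<in>B. a \<odot>\<^bsub>M\<^esub> (x \<oplus>\<^bsub>M\<^esub> y) = x' \<oplus>\<^bsub>M\<^esub> y'"
      by blast
  qed
qed

lemma submodule_subset_set_add:
  assumes lm: "left_module R M" and A: "submodule A R M" and B: "submodule B R M"
  shows "A \<subseteq> A <+>\<^bsub>M\<^esub> B" "B \<subseteq> A <+>\<^bsub>M\<^esub> B"
proof -
  interpret M: abelian_group M using left_module_abelian_group[OF lm] .
  show "A \<subseteq> A <+>\<^bsub>M\<^esub> B"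
  proof
    fix x assume "x \<in> A"
    then have "x \<oplus>\<^bsub>M\<^esub> \<zero>\<^bsub>M\<^esub> \<in> A <+>\<^bsub>M\<^esub> B"
      using submoduleD(2)[OF B] unfolding set_add_def' by blast
    then show "x \<in> A <+>\<^bsub>M\<^esub> B"
      using \<open>x \<in> A\<close> submoduleD(1)[OF A] by auto
  qed
  show "B \<subseteq> A <+>\<^bsub>M\<^esub> B"
  proof
    fix y assume "y \<in> B"
    then have "\<zero>\<^bsub>M\<^esub> \<oplus>\<^bsub>M\<^esub> y \<in> A <+>\<^bsub>M\<^esub> B"
      using submoduleD(2)[OF A] unfolding set_add_def' by blast
    then show "y \<in> A <+>\<^bsub>M\<^esub> B"
      using \<open>y \<in> B\<close> submoduleD(1)[OF B] by auto
  qed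
qed

lemma quotient_module_simps:
  "carrier (quotient_module R M M' Q) = {Q +>\<^bsub>M\<^esub> x | x. x \<in> M'}"
  "\<zero>\<^bsub>quotient_module R M M' Q\<^esub> = Q"
  "A \<oplus>\<^bsub>quotient_module R M M' Q\<^esub> B = A <+>\<^bsub>M\<^esub> B"
  "r \<odot>\<^bsub>quotient_module R M M' Q\<^esub> A = Q <+>\<^bsub>M\<^esub> ((\<lambda>x. r \<odot>\<^bsub>M\<^esub> x) ` A)"
  unfolding quotient_module_def by simp_all

text \<open>The preimage of a submodule K of M'/N under the projection is the union
  of the cosets in K.\<close>

lemma submodule_Union_quotient_module:
  assumes lm: "left_module R M" and N: "submodule N R M" and M': "M' \<subseteq> carrier M"
    and K: "submodule K R (quotient_module R M M' N)"
  shows "submodule (\<Union>K) R M"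
proof -
  interpret M: abelian_group M using left_module_abelian_group[OF lm] .
  note K_closed = submoduleD[OF K, unfolded quotient_module_simps]
  have Union_carrier: "\<Union>K \<subseteq> carrier M"
  proof
    fix x assume "x \<in> \<Union>K"
    then obtain a where "a \<in> M'" "x \<in> N +>\<^bsub>M\<^esub> a"
      using K_closed(1) by blast
    then show "x \<in> carrier M"
      using M' submoduleD(1)[OF N] unfolding a_r_coset_def' by (auto intro!: M.add.m_closed)
  qed
  show ?thesis
  proof (rule left_module_submoduleI[OF lm Union_carrier])
    show "\<zero>\<^bsub>M\<^esub> \<in> \<Union>K"
      using K_closed(2) submoduleD(2)[OF N] by blast
    show "x \<oplus>\<^bsub>M\<^esub> y \<in> \<Union>K" if xy: "x \<in> \<Union>K" "y \<in> \<Union>K" for x y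
    proof -
      obtain A B where "A \<in> K" "x \<in> A" "B \<in> K" "y \<in> B"
        using xy by blast
      then have "A <+>\<^bsub>M\<^esub> B \<in> K" "x \<oplus>\<^bsub>M\<^esub> y \<in> A <+>\<^bsub>M\<^esub> B"
        using K_closed(3) unfolding set_add_def' by auto
      then show ?thesis by blast
    qed
    show "a \<odot>\<^bsub>M\<^esub> x \<in> \<Union>K" if a: "a \<in> carrier R" and x: "x \<in> \<Union>K" for a x
    proof -
      obtain A where A: "A \<in> K" "x \<in> A"
        using x by blast
      have "a \<odot>\<^bsub>M\<^esub> x \<in> carrier M"
        using left_module_smult_closed[OF lm a] Union_carrier x by blast
      then have "\<zero>\<^bsub>M\<^esub> \<oplus>\<^bsub>M\<^esub> a \<odot>\<^bsub>M\<^esub> x \<in> N <+>\<^bsub>M\<^esub> ((\<lambda>x. a \<odot>\<^bsub>M\<^esub> x) ` A)"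
        using submoduleD(2)[OF N] A(2) unfolding set_add_def' by blast
      moreover have "N <+>\<^bsub>M\<^esub> ((\<lambda>x. a \<odot>\<^bsub>M\<^esub> x) ` A) \<in> K"
        using K_closed(4) a A(1) by blast
      ultimately show ?thesis
        using \<open>a \<odot>\<^bsub>M\<^esub> x \<in> carrier M\<close> by auto
    qed
  qed
qed

lemma quotient_module_submodule_eq_carrier:
  assumes lm: "left_module R M" and N: "submodule N R M" and P: "submodule P R M"
    and K: "submodule K R (quotient_module R M (P <+>\<^bsub>M\<^esub> N) N)" and PK: "P \<subseteq> \<Union>K"
  shows "K = carrier (quotient_module R M (P <+>\<^bsub>M\<^esub> N) N)"
proof -
  interpret M: abelian_group M using left_module_abelian_group[OF lm] .
  note K_closed = submoduleD[OF K, unfolded quotient_module_simps]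
  have N_subgroup: "subgroup N (add_monoid M)"
    using submodule.axioms(1)[OF N] .
  have "N +>\<^bsub>M\<^esub> x \<in> K" if x: "x \<in> P <+>\<^bsub>M\<^esub> N" for x
  proof -
    obtain p n where pn: "p \<in> P" "n \<in> N" "x = p \<oplus>\<^bsub>M\<^esub> n"
      using x unfolding set_add_def' by blast
    have p_n_carrier: "p \<in> carrier M" "n \<in> carrier M"
      using pn submoduleD(1)[OF P] submoduleD(1)[OF N] by auto
    obtain A where A: "A \<in> K" "p \<in> A"
      using PK pn(1) by blast
    then obtain a where a: "a \<in> P <+>\<^bsub>M\<^esub> N" "A = N +>\<^bsub>M\<^esub> a"
      using K_closed(1) by blast
    have "a \<in> carrier M"
      using a(1) submoduleD(1)[OF submodule_set_add[OF lm P N]] by blast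
    then have "N +>\<^bsub>M\<^esub> a = N +>\<^bsub>M\<^esub> p"
      using M.a_repr_independence[OF _ _ N_subgroup] A a by simp
    moreover have "x \<in> N +>\<^bsub>M\<^esub> p"
      using pn p_n_carrier unfolding a_r_coset_def' by (auto simp: M.a_comm)
    then have "N +>\<^bsub>M\<^esub> p = N +>\<^bsub>M\<^esub> x"
      using M.a_repr_independence[OF _ p_n_carrier(1) N_subgroup] by simp
    ultimately show ?thesis
      using A a by simp
  qed
  then show ?thesis
    using K_closed(1) unfolding quotient_module_simps by blast
qed

lemma strongly_hollow_inD:
  "strongly_hollow_in R M P \<Longrightarrow> submodule K R M \<Longrightarrow> submodule L R M \<Longrightarrow>
    P \<subseteq> K <+>\<^bsub>M\<^esub> L \<Longrightarrow> P \<subseteq> K \<or> P \<subseteq> L"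
  unfolding strongly_hollow_in_def by blast

lemma strongly_hollow_in_unique_supplement:
  assumes lm: "left_module R M" and P: "submodule P R M" and SH: "strongly_hollow_in R M P"
    and N: "submodule N R M" and P_not_N: "\<not> P \<subseteq> N"
  shows "unique_supplement R M (P <+>\<^bsub>M\<^esub> N) N P"
proof -
  have P_in_supplement: "P \<subseteq> N'" if "submodule N' R M" "N' <+>\<^bsub>M\<^esub> N = P <+>\<^bsub>M\<^esub> N" for N'
    using strongly_hollow_inD[OF SH that(1) N] that(2) P_not_N submodule_subset_set_add(1)[OF lm P N]
    by argo
  have "is_supplement R M (P <+>\<^bsub>M\<^esub> N) N P"
    unfolding is_supplement_def
    using P submodule_subset_set_add(1)[OF lm P N] P_in_supplement by blast
  moreover have "N' = P" if "is_supplement R M (P <+>\<^bsub>M\<^esub> N) N N'" for N'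
    using that P P_in_supplement unfolding is_supplement_def by blast
  ultimately show ?thesis
    unfolding unique_supplement_def by blast
qed

lemma strongly_hollow_in_quotient_hollow:
  assumes lm: "left_module R M" and P: "submodule P R M" and SH: "strongly_hollow_in R M P"
    and N: "submodule N R M"
  shows "hollow R (quotient_module R M (P <+>\<^bsub>M\<^esub> N) N)"
  unfolding hollow_def
proof (intro allI impI)
  interpret M: abelian_group M using left_module_abelian_group[OF lm] .
  let ?Q = "quotient_module R M (P <+>\<^bsub>M\<^esub> N) N"
  fix K L
  assume K: "submodule K R ?Q" and L: "submodule L R ?Q" and KL: "K <+>\<^bsub>?Q\<^esub> L = carrier ?Q"
  have M'_carrier: "P <+>\<^bsub>M\<^esub> N \<subseteq> carrier M"
    using submoduleD(1)[OF submodule_set_add[OF lm P N]] .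
  have "P \<subseteq> \<Union>K <+>\<^bsub>M\<^esub> \<Union>L"
  proof
    fix x assume x: "x \<in> P"
    then have "N +>\<^bsub>M\<^esub> x \<in> K <+>\<^bsub>?Q\<^esub> L"
      using KL submodule_subset_set_add(1)[OF lm P N] unfolding quotient_module_simps by blast
    then obtain A B where AB: "A \<in> K" "B \<in> L" "N +>\<^bsub>M\<^esub> x = A <+>\<^bsub>M\<^esub> B"
      unfolding set_add_def'[of ?Q] quotient_module_simps by blast
    have "x \<in> N +>\<^bsub>M\<^esub> x"
      using submoduleD(2)[OF N] submoduleD(1)[OF P] x unfolding a_r_coset_def' by force
    then show "x \<in> \<Union>K <+>\<^bsub>M\<^esub> \<Union>L"
      using AB unfolding set_add_def' by blast
  qed
  then have "P \<subseteq> \<Union>K \<or> P \<subseteq> \<Union>L"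
    by (rule strongly_hollow_inD[OF SH submodule_Union_quotient_module[OF lm N M'_carrier K]
        submodule_Union_quotient_module[OF lm N M'_carrier L]])
  then show "K = carrier ?Q \<or> L = carrier ?Q"
    using quotient_module_submodule_eq_carrier[OF lm N P] K L by blast
qed

theorem proposition2p9:
  fixes R :: "('a, 'c) ring_scheme" and M :: "('a, 'b, 'd) module_scheme" and P :: "'b set"
  assumes "left_module R M"
    and "submodule P R M"
    and "strongly_hollow_in R M P"
  shows "waist_in R M P \<or>
    (\<exists>Q M'. submodule Q R M \<and> submodule M' R M \<and> Q \<subseteq> M' \<and> P \<subseteq> M' \<and>
        unique_supplement R M M' Q P \<and> hollow R (quotient_module R M M' Q))"
proof (cases "waist_in R M P")
  case False
  then obtain N where N: "submodule N R M" "\<not> P \<subseteq> N"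
    unfolding waist_in_def by blast
  let ?M' = "P <+>\<^bsub>M\<^esub> N"
  have "submodule N R M \<and> submodule ?M' R M \<and> N \<subseteq> ?M' \<and> P \<subseteq> ?M' \<and>
      unique_supplement R M ?M' N P \<and> hollow R (quotient_module R M ?M' N)"
    using N(1) submodule_set_add[OF assms(1,2) N(1)] submodule_subset_set_add[OF assms(1,2) N(1)]
      strongly_hollow_in_unique_supplement[OF assms N]
      strongly_hollow_in_quotient_hollow[OF assms N(1)]
    by (intro conjI)
  then show ?thesis by blast
qed simp

end
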